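(* For every unweighted congestion game $\mathcal{G}$ with cubic latency functions, $\mathrm{PoS}(\mathcal{G})\le 3.322$.
   Context: A weighted congestion game consists of a finite set $[n]=\{1,\dots,n\}$ of players, a finite set $E$ of resources, for each player $i$ a weight $w_i>0$ and a nonempty finite strategy set $\Sigma_i\subseteq 2^E$, and for each resource $e$ a latency function $\ell_e:\mathbb{R}_{\ge 0}\to\mathbb{R}_{\ge 0}$. It is unweighted if $w_i=1$ for all $i$. Cubic latency functions means $\ell_e(x)=\sum_{j=0}^{3}\alpha_{e,j}x^j$ with all $\alpha_{e,j}\ge 0$. For a strategy profile $S=(s_1,\dots,s_n)$, the congestion of $e$ is $L_e(S)=\sum_{i:\,e\in s_i}w_i$, the cost of player $i$ is $c_i(S)=\sum_{e\in s_i}\ell_e(L_e(S))$, and $\mathrm{SUM}(S)=\sum_i c_i(S)$; $S^*$ minimizes $\mathrm{SUM}$. A pure Nash equilibrium (PNE) is a profile $S$ with $c_i(S)\le c_i(S_{-i}\diamond t)$ for all $i$ and $t\in\Sigma_i$, where $(S_{-i}\diamond t)$ replaces $s_i$ by $t$. $\mathrm{PoS}(\mathcal{G})=\min_{S\ \mathrm{PNE}}\mathrm{SUM}(S)/\mathrm{SUM}(S^* )$. *)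

theory Defs
  imports Main "HOL.Real"
begin

text \<open>Players are 0,...,n-1 (the paper's [n] shifted by one);
  resources form the finite set E; Sig i is the strategy set of player i; w i its weight;
  l e the latency function of resource e. A strategy profile is a function S with
  S i the strategy of player i (values for i >= n are irrelevant).\<close>

definition is_congestion_game ::
  "nat \<Rightarrow> 'e set \<Rightarrow> (nat \<Rightarrow> real) \<Rightarrow> (nat \<Rightarrow> 'e set set) \<Rightarrow> ('e \<Rightarrow> real \<Rightarrow> real) \<Rightarrow> bool" where
  "is_congestion_game n E w Sig l \<longleftrightarrow>
     finite E \<and>
     (\<forall>i<n. w i > 0 \<and> Sig i \<noteq> {} \<and> finite (Sig i) \<and> Sig i \<subseteq> Pow E) \<and>
     (\<forall>e\<in>E. \<forall>x\<ge>0. l e x \<ge> 0)"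

definition unweighted :: "nat \<Rightarrow> (nat \<Rightarrow> real) \<Rightarrow> bool" where
  "unweighted n w \<longleftrightarrow> (\<forall>i<n. w i = 1)"

definition cubic_latencies :: "'e set \<Rightarrow> ('e \<Rightarrow> real \<Rightarrow> real) \<Rightarrow> bool" where
  "cubic_latencies E l \<longleftrightarrow>
     (\<forall>e\<in>E. \<exists>\<alpha> :: nat \<Rightarrow> real. (\<forall>j. \<alpha> j \<ge> 0) \<and>
        (\<forall>x\<ge>0. l e x = (\<Sum>j\<le>3. \<alpha> j * x ^ j)))"

definition is_profile :: "nat \<Rightarrow> (nat \<Rightarrow> 'e set set) \<Rightarrow> (nat \<Rightarrow> 'e set) \<Rightarrow> bool" where
  "is_profile n Sig S \<longleftrightarrow> (\<forall>i<n. S i \<in> Sig i)"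

definition congestion :: "nat \<Rightarrow> (nat \<Rightarrow> real) \<Rightarrow> (nat \<Rightarrow> 'e set) \<Rightarrow> 'e \<Rightarrow> real" where
  "congestion n w S e = (\<Sum>i\<in>{i. i < n \<and> e \<in> S i}. w i)"

definition player_cost ::
  "nat \<Rightarrow> (nat \<Rightarrow> real) \<Rightarrow> ('e \<Rightarrow> real \<Rightarrow> real) \<Rightarrow> (nat \<Rightarrow> 'e set) \<Rightarrow> nat \<Rightarrow> real" where
  "player_cost n w l S i = (\<Sum>e\<in>S i. l e (congestion n w S e))"

definition SUM_cost ::
  "nat \<Rightarrow> (nat \<Rightarrow> real) \<Rightarrow> ('e \<Rightarrow> real \<Rightarrow> real) \<Rightarrow> (nat \<Rightarrow> 'e set) \<Rightarrow> real" where
  "SUM_cost n w l S = (\<Sum>i<n. player_cost n w l S i)"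

definition is_PNE ::
  "nat \<Rightarrow> (nat \<Rightarrow> real) \<Rightarrow> (nat \<Rightarrow> 'e set set) \<Rightarrow> ('e \<Rightarrow> real \<Rightarrow> real) \<Rightarrow> (nat \<Rightarrow> 'e set) \<Rightarrow> bool" where
  "is_PNE n w Sig l S \<longleftrightarrow> is_profile n Sig S \<and>
     (\<forall>i<n. \<forall>t\<in>Sig i. player_cost n w l S i \<le> player_cost n w l (S(i := t)) i)"

end

theory Submission
  imports Defs "HOL-Library.FuncSet"
begin

text \<open>Let S minimise Rosenthal's potential \<Phi>; then S is a pure Nash equilibrium. Fix a
  profile T and let x(e), y(e) be the loads of S and T on resource e. The equilibrium conditions
  give SUM(S) \<le> \<Sum>e. y(e) l_e(x(e) + 1) and minimality gives \<Phi>(S) \<le> \<Phi>(T), so for \<nu>, \<mu> \<ge> 0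
    SUM(S) \<le> (1 - \<nu>) SUM(S) + \<nu> \<Sum>e. y(e) l_e(x(e) + 1) + \<mu> (\<Phi>(T) - \<Phi>(S)).
  With \<nu> = 0.3317 and \<mu> = 2.9901 the right-hand side is at most 3.322 SUM(T), resource by
  resource. That per-resource inequality is linear in the latency, so it suffices to check it for
  the monomials 1, z, z^2, z^3. There it is a polynomial inequality in the naturals x(e), y(e);
  writing each of them as 0 or as 1 + u with u \<ge> 0, the expanded polynomial is nonnegative by
  weighted AM-GM.\<close>

definition load :: "nat \<Rightarrow> (nat \<Rightarrow> 'e set) \<Rightarrow> 'e \<Rightarrow> nat" where
  "load n S e = card {i. i < n \<and> e \<in> S i}"

definition rosenthal_potential ::
  "nat \<Rightarrow> 'e set \<Rightarrow> ('e \<Rightarrow> real \<Rightarrow> real) \<Rightarrow> (nat \<Rightarrow> 'e set) \<Rightarrow> real" where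
  "rosenthal_potential n E l S = (\<Sum>e\<in>E. \<Sum>k = 1..load n S e. l e (real k))"

lemma congestion_unweighted:
  assumes "unweighted n w"
  shows "congestion n w S e = real (load n S e)"
proof -
  have "congestion n w S e = (\<Sum>i\<in>{i. i < n \<and> e \<in> S i}. 1)"
    unfolding congestion_def by (rule sum.cong) (use assms in \<open>auto simp: unweighted_def\<close>)
  then show ?thesis by (simp add: load_def)
qed

lemma sum_strategies_eq_sum_load:
  fixes g :: "'e \<Rightarrow> real"
  assumes "finite E" and "\<forall>i<n. S i \<subseteq> E"
  shows "(\<Sum>i<n. \<Sum>e\<in>S i. g e) = (\<Sum>e\<in>E. real (load n S e) * g e)"
proof -
  have "(\<Sum>i<n. \<Sum>e\<in>S i. g e) = (\<Sum>i<n. \<Sum>e\<in>{e. e \<in> E \<and> e \<in> S i}. g e)"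
    using assms(2) by (intro sum.cong refl arg_cong2[where f = sum]) auto
  also have "\<dots> = (\<Sum>e\<in>E. \<Sum>i\<in>{i. i \<in> {..<n} \<and> e \<in> S i}. g e)"
    using assms(1) by (rule sum.swap_restrict[OF finite_lessThan])
  also have "\<dots> = (\<Sum>e\<in>E. real (load n S e) * g e)"
    by (simp add: load_def)
  finally show ?thesis .
qed

lemma SUM_cost_unweighted:
  assumes "finite E" and "\<forall>i<n. S i \<subseteq> E" and "unweighted n w"
  shows "SUM_cost n w l S = (\<Sum>e\<in>E. real (load n S e) * l e (real (load n S e)))"
  unfolding SUM_cost_def player_cost_def congestion_unweighted[OF assms(3)]
  using sum_strategies_eq_sum_load[OF assms(1,2)] .

lemma load_fun_upd:
  assumes "i < n"
  shows "load n (S(i := t)) e = card {j. j < n \<and> j \<noteq> i \<and> e \<in> S j} + (if e \<in> t then 1 else 0)"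
proof -
  let ?others = "{j. j < n \<and> j \<noteq> i \<and> e \<in> S j}"
  have "{j. j < n \<and> e \<in> (S(i := t)) j} = (if e \<in> t then insert i ?others else ?others)"
    using assms by auto
  moreover have "finite ?others" "i \<notin> ?others" by auto
  ultimately show ?thesis by (simp add: load_def)
qed

lemma load_fun_upd_le:
  assumes "i < n"
  shows "load n (S(i := t)) e \<le> load n S e + 1"
  using load_fun_upd[OF assms, of S t e] load_fun_upd[OF assms, of S "S i" e] by simp

lemma sum_atLeastAtMost_plus_indicator:
  "(\<Sum>k = 1..(m::nat) + (if b then 1 else 0). f k) = (\<Sum>k = 1..m. f k) + (if b then f (m + 1) else 0)"
  by (cases b) (simp_all add: sum.cl_ivl_Suc flip: Suc_eq_plus1)

lemma rosenthal_potential_fun_upd: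
  assumes "finite E" and "\<forall>j<n. S j \<subseteq> E" and "i < n" and "t \<subseteq> E" and "unweighted n w"
  shows "rosenthal_potential n E l (S(i := t)) - rosenthal_potential n E l S
    = player_cost n w l (S(i := t)) i - player_cost n w l S i"
proof -
  define others where "others e = card {j. j < n \<and> j \<noteq> i \<and> e \<in> S j}" for e
  have load_upd: "load n (S(i := t)) e = others e + (if e \<in> t then 1 else 0)" for e
    unfolding others_def by (rule load_fun_upd[OF assms(3)])
  have load: "load n S e = others e + (if e \<in> S i then 1 else 0)" for e
    using load_fun_upd[OF assms(3), of S "S i" e] by (simp add: others_def)
  have "rosenthal_potential n E l (S(i := t)) - rosenthal_potential n E l S
      = (\<Sum>e\<in>E. if e \<in> t then l e (real (others e + 1)) else 0)
      - (\<Sum>e\<in>E. if e \<in> S i then l e (real (others e + 1)) else 0)"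
    unfolding rosenthal_potential_def load load_upd sum_atLeastAtMost_plus_indicator
    by (simp add: sum.distrib)
  also have "\<dots> = (\<Sum>e\<in>t. l e (real (others e + 1))) - (\<Sum>e\<in>S i. l e (real (others e + 1)))"
  proof -
    have "{e \<in> E. e \<in> t} = t" "{e \<in> E. e \<in> S i} = S i"
      using assms by auto
    then show ?thesis
      using assms(1) by (simp add: sum.inter_filter[symmetric])
  qed
  also have "\<dots> = player_cost n w l (S(i := t)) i - player_cost n w l S i"
    unfolding player_cost_def congestion_unweighted[OF assms(5)] load load_upd by simp
  finally show ?thesis .
qed

lemma rosenthal_potential_restrict:
  "rosenthal_potential n E l (restrict S {..<n}) = rosenthal_potential n E l S"
proof -
  have "load n (restrict S {..<n}) = load n S"
    unfolding load_def by (intro ext arg_cong[where f = card]) auto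
  then show ?thesis by (simp add: rosenthal_potential_def)
qed

lemma ex_rosenthal_potential_minimizer:
  assumes "\<forall>i<n. Sig i \<noteq> {} \<and> finite (Sig i)"
  obtains S where "is_profile n Sig S"
    and "\<And>T. is_profile n Sig T \<Longrightarrow> rosenthal_potential n E l S \<le> rosenthal_potential n E l T"
proof -
  let ?\<Phi> = "rosenthal_potential n E l"
  have fin: "finite (Pi\<^sub>E {..<n} Sig)" and ne: "Pi\<^sub>E {..<n} Sig \<noteq> {}"
    using assms by (auto intro: finite_PiE simp: PiE_eq_empty_iff)
  obtain S where "is_arg_min ?\<Phi> (\<lambda>T. T \<in> Pi\<^sub>E {..<n} Sig) S"
    using ex_is_arg_min_if_finite[OF fin ne, of ?\<Phi>] ..
  then have S: "S \<in> Pi\<^sub>E {..<n} Sig" and min: "\<And>T. T \<in> Pi\<^sub>E {..<n} Sig \<Longrightarrow> \<not> ?\<Phi> T < ?\<Phi> S"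
    unfolding is_arg_min_def by auto
  show thesis
  proof
    show "is_profile n Sig S"
      using S by (auto simp: is_profile_def)
  next
    fix T assume "is_profile n Sig T"
    then have "restrict T {..<n} \<in> Pi\<^sub>E {..<n} Sig"
      by (simp add: is_profile_def)
    from min[OF this] show "?\<Phi> S \<le> ?\<Phi> T"
      by (simp only: rosenthal_potential_restrict not_less)
  qed
qed

lemma rosenthal_potential_minimizer_is_PNE:
  assumes "finite E" and "\<forall>i<n. Sig i \<subseteq> Pow E" and "unweighted n w"
    and "is_profile n Sig S"
    and "\<And>T. is_profile n Sig T \<Longrightarrow> rosenthal_potential n E l S \<le> rosenthal_potential n E l T"
  shows "is_PNE n w Sig l S"
  unfolding is_PNE_def
proof (intro conjI allI impI ballI)
  fix i t assume i: "i < n" and t: "t \<in> Sig i"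
  have "\<forall>j<n. S j \<subseteq> E"
    using assms(2,4) by (auto simp: is_profile_def)
  moreover have "t \<subseteq> E"
    using assms(2) i t by auto
  moreover have "rosenthal_potential n E l S \<le> rosenthal_potential n E l (S(i := t))"
    using assms(4) i t by (intro assms(5)) (simp add: is_profile_def)
  ultimately show "player_cost n w l S i \<le> player_cost n w l (S(i := t)) i"
    using rosenthal_potential_fun_upd[OF assms(1) _ i _ assms(3), of S t l] by simp
qed (fact assms(4))

lemma PNE_SUM_cost_le:
  assumes "finite E" and "\<forall>i<n. Sig i \<subseteq> Pow E" and "unweighted n w"
    and "\<forall>e\<in>E. mono_on {0..} (l e)"
    and "is_PNE n w Sig l S" and "is_profile n Sig T"
  shows "SUM_cost n w l S \<le> (\<Sum>e\<in>E. real (load n T e) * l e (real (load n S e) + 1))"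
proof -
  have T_E: "\<forall>i<n. T i \<subseteq> E"
    using assms(2,6) by (auto simp: is_profile_def)
  have "SUM_cost n w l S \<le> (\<Sum>i<n. player_cost n w l (S(i := T i)) i)"
    unfolding SUM_cost_def
    using assms(5,6) by (intro sum_mono) (auto simp: is_PNE_def is_profile_def)
  also have "\<dots> \<le> (\<Sum>i<n. \<Sum>e\<in>T i. l e (real (load n S e) + 1))"
    unfolding player_cost_def fun_upd_same congestion_unweighted[OF assms(3)]
  proof (intro sum_mono)
    fix i e assume "i \<in> {..<n}" "e \<in> T i"
    then show "l e (real (load n (S(i := T i)) e)) \<le> l e (real (load n S e) + 1)"
      using T_E assms(4) load_fun_upd_le[of i n S "T i" e]
      by (intro mono_onD[of "{0..}" "l e"]) auto
  qed
  also have "\<dots> = (\<Sum>e\<in>E. real (load n T e) * l e (real (load n S e) + 1))"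
    by (rule sum_strategies_eq_sum_load[OF assms(1) T_E])
  finally show ?thesis .
qed

text \<open>With x and y the loads of the equilibrium and of the comparison profile on one
  resource, the three terms on the left are that resource's share of SUM(S), of the equilibrium
  bound and of the potential difference.\<close>

definition potential_smooth :: "real \<Rightarrow> real \<Rightarrow> real \<Rightarrow> (real \<Rightarrow> real) \<Rightarrow> bool" where
  "potential_smooth \<nu> \<mu> \<rho> f \<longleftrightarrow> (\<forall>x y :: nat.
     (1 - \<nu>) * (real x * f (real x)) + \<nu> * (real y * f (real x + 1))
       + \<mu> * ((\<Sum>k = 1..y. f (real k)) - (\<Sum>k = 1..x. f (real k)))
     \<le> \<rho> * (real y * f (real y)))"

lemma SUM_cost_le_if_potential_smooth:
  assumes "finite E" and "\<forall>i<n. Sig i \<subseteq> Pow E" and "unweighted n w"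
    and "\<forall>e\<in>E. mono_on {0..} (l e)" and "\<forall>e\<in>E. potential_smooth \<nu> \<mu> \<rho> (l e)"
    and "0 \<le> \<nu>" and "0 \<le> \<mu>"
    and "is_PNE n w Sig l S" and "is_profile n Sig T"
    and "rosenthal_potential n E l S \<le> rosenthal_potential n E l T"
  shows "SUM_cost n w l S \<le> \<rho> * SUM_cost n w l T"
proof -
  define x where "x = load n S"
  define y where "y = load n T"
  define nash_bound where "nash_bound = (\<Sum>e\<in>E. real (y e) * l e (real (x e) + 1))"
  have S_E: "\<forall>i<n. S i \<subseteq> E" and T_E: "\<forall>i<n. T i \<subseteq> E"
    using assms(2,8,9) by (auto simp: is_PNE_def is_profile_def)
  have nash: "SUM_cost n w l S \<le> nash_bound"
    unfolding nash_bound_def x_def y_def using assms(1-4,8,9) by (rule PNE_SUM_cost_le)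
  have "(1 - \<nu>) * SUM_cost n w l S + \<nu> * nash_bound
      + \<mu> * (rosenthal_potential n E l T - rosenthal_potential n E l S)
    = (\<Sum>e\<in>E. (1 - \<nu>) * (real (x e) * l e (real (x e))) + \<nu> * (real (y e) * l e (real (x e) + 1))
      + \<mu> * ((\<Sum>k = 1..y e. l e (real k)) - (\<Sum>k = 1..x e. l e (real k))))"
    unfolding SUM_cost_unweighted[OF assms(1) S_E assms(3)] nash_bound_def rosenthal_potential_def
      x_def y_def
    by (simp add: sum.distrib sum_subtractf sum_distrib_left right_diff_distrib)
  also have "\<dots> \<le> (\<Sum>e\<in>E. \<rho> * (real (y e) * l e (real (y e))))"
    using assms(5) by (intro sum_mono) (simp add: potential_smooth_def)
  also have "\<dots> = \<rho> * SUM_cost n w l T"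
    unfolding SUM_cost_unweighted[OF assms(1) T_E assms(3)] y_def by (simp add: sum_distrib_left)
  finally have combined: "(1 - \<nu>) * SUM_cost n w l S + \<nu> * nash_bound
      + \<mu> * (rosenthal_potential n E l T - rosenthal_potential n E l S) \<le> \<rho> * SUM_cost n w l T" .
  have "\<nu> * SUM_cost n w l S \<le> \<nu> * nash_bound"
    using nash assms(6) by (rule mult_left_mono)
  moreover have "0 \<le> \<mu> * (rosenthal_potential n E l T - rosenthal_potential n E l S)"
    using assms(7,10) by simp
  ultimately show ?thesis
    using combined by (simp add: algebra_simps)
qed

lemma potential_smooth_cong:
  assumes "\<And>z. 0 \<le> z \<Longrightarrow> f z = g z"
  shows "potential_smooth \<nu> \<mu> \<rho> f \<longleftrightarrow> potential_smooth \<nu> \<mu> \<rho> g"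
  unfolding potential_smooth_def using assms by simp

lemma potential_smooth_zero: "potential_smooth \<nu> \<mu> \<rho> (\<lambda>z. 0)"
  by (simp add: potential_smooth_def)

lemma potential_smooth_add:
  assumes "potential_smooth \<nu> \<mu> \<rho> f" and "potential_smooth \<nu> \<mu> \<rho> g"
  shows "potential_smooth \<nu> \<mu> \<rho> (\<lambda>z. f z + g z)"
  unfolding potential_smooth_def
proof (intro allI)
  fix x y :: nat
  from assms[unfolded potential_smooth_def, rule_format, of x y]
  show "(1 - \<nu>) * (real x * (f (real x) + g (real x)))
      + \<nu> * (real y * (f (real x + 1) + g (real x + 1)))
      + \<mu> * ((\<Sum>k = 1..y. f (real k) + g (real k)) - (\<Sum>k = 1..x. f (real k) + g (real k)))
    \<le> \<rho> * (real y * (f (real y) + g (real y)))"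
    by (simp add: sum.distrib algebra_simps)
qed

lemma potential_smooth_cmult:
  assumes "potential_smooth \<nu> \<mu> \<rho> f" and "0 \<le> c"
  shows "potential_smooth \<nu> \<mu> \<rho> (\<lambda>z. c * f z)"
  unfolding potential_smooth_def
proof (intro allI)
  fix x y :: nat
  have "c * ((1 - \<nu>) * (real x * f (real x)) + \<nu> * (real y * f (real x + 1))
      + \<mu> * ((\<Sum>k = 1..y. f (real k)) - (\<Sum>k = 1..x. f (real k))))
    \<le> c * (\<rho> * (real y * f (real y)))"
    using assms unfolding potential_smooth_def by (intro mult_left_mono) auto
  then show "(1 - \<nu>) * (real x * (c * f (real x))) + \<nu> * (real y * (c * f (real x + 1)))
      + \<mu> * ((\<Sum>k = 1..y. c * f (real k)) - (\<Sum>k = 1..x. c * f (real k)))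
    \<le> \<rho> * (real y * (c * f (real y)))"
    by (simp add: sum_distrib_left[symmetric] algebra_simps)
qed

lemma potential_smooth_sum:
  assumes "finite J" and "\<forall>j\<in>J. 0 \<le> \<alpha> j" and "\<forall>j\<in>J. potential_smooth \<nu> \<mu> \<rho> (g j)"
  shows "potential_smooth \<nu> \<mu> \<rho> (\<lambda>z. \<Sum>j\<in>J. \<alpha> j * g j z)"
  using assms
proof (induction J rule: finite_induct)
  case empty
  show ?case by (simp add: potential_smooth_zero)
next
  case (insert j J)
  then show ?case
    by (simp add: potential_smooth_add potential_smooth_cmult)
qed

lemma potential_smoothI:
  fixes F :: "real \<Rightarrow> real" and g :: "real \<Rightarrow> real \<Rightarrow> real"
  assumes "\<And>m. (\<Sum>k = 1..m. f (real k)) = F (real m)"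
    and "\<And>x y. g x y = \<rho> * (y * f y) - (1 - \<nu>) * (x * f x) - \<nu> * (y * f (x + 1)) - \<mu> * (F y - F x)"
    and "\<And>x y. 0 \<le> g (real x) (real y)"
  shows "potential_smooth \<nu> \<mu> \<rho> f"
  unfolding potential_smooth_def
proof (intro allI)
  fix x y :: nat
  from assms(3)[of x y] show "(1 - \<nu>) * (real x * f (real x)) + \<nu> * (real y * f (real x + 1))
      + \<mu> * ((\<Sum>k = 1..y. f (real k)) - (\<Sum>k = 1..x. f (real k)))
    \<le> \<rho> * (real y * f (real y))"
    unfolding assms(1,2) by argo
qed

lemma nonneg_at_nat_pairsI:
  fixes g :: "real \<Rightarrow> real \<Rightarrow> real"
  assumes "0 \<le> g 0 0"
    and "\<And>v. 0 \<le> v \<Longrightarrow> 0 \<le> g 0 (1 + v)"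
    and "\<And>u. 0 \<le> u \<Longrightarrow> 0 \<le> g (1 + u) 0"
    and "\<And>u v. 0 \<le> u \<Longrightarrow> 0 \<le> v \<Longrightarrow> 0 \<le> g (1 + u) (1 + v)"
  shows "0 \<le> g (real x) (real y)"
proof -
  have shift: "real m = 0 \<or> (\<exists>u\<ge>0. real m = 1 + u)" for m :: nat
    by (cases m) auto
  show ?thesis
    using shift[of x] shift[of y] assms by auto
qed

lemma sum_of_nats: "(\<Sum>k = 1..m. real k) = real m * (real m + 1) / 2"
  by (induction m) (simp_all add: field_simps)

lemma sum_of_squares: "(\<Sum>k = 1..m. real k ^ 2) = real m * (real m + 1) * (2 * real m + 1) / 6"
  by (induction m) (simp_all add: field_simps power2_eq_square)

lemma sum_of_cubes: "(\<Sum>k = 1..m. real k ^ 3) = (real m * (real m + 1) / 2) ^ 2"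
  by (induction m) (simp_all add: field_simps power2_eq_square power3_eq_cube)

lemma weighted_amgm_2: "2 * (u * v) \<le> u ^ 2 + (v :: real) ^ 2"
  using sum_squares_ge_zero[of "u - v" 0] by (simp add: power2_eq_square algebra_simps)

lemma weighted_amgm_3:
  fixes u v :: real
  assumes "0 \<le> u" and "0 \<le> v"
  shows "3 * (u ^ 2 * v) \<le> 2 * u ^ 3 + v ^ 3"
proof -
  have "0 \<le> (u - v) ^ 2 * (2 * u + v)"
    using assms by simp
  also have "\<dots> = 2 * u ^ 3 + v ^ 3 - 3 * (u ^ 2 * v)"
    by (simp add: power2_eq_square power3_eq_cube algebra_simps)
  finally show ?thesis by simp
qed

lemma weighted_amgm_4:
  fixes u v :: real
  shows "4 * (u ^ 3 * v) \<le> 3 * u ^ 4 + v ^ 4"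
proof -
  have "0 \<le> (u - v) ^ 2 * (2 * u ^ 2 + (u + v) ^ 2)"
    by simp
  also have "\<dots> = 3 * u ^ 4 + v ^ 4 - 4 * (u ^ 3 * v)"
    by (simp add: power2_eq_square power3_eq_cube power4_eq_xxxx algebra_simps)
  finally show ?thesis by simp
qed

lemma potential_smooth_one: "potential_smooth 0.3317 2.9901 3.322 (\<lambda>z. 1)"
  by (simp add: potential_smooth_def field_simps)

lemma potential_smooth_id: "potential_smooth 0.3317 2.9901 3.322 (\<lambda>z. z)"
proof -
  define g :: "real \<Rightarrow> real \<Rightarrow> real" where
    "g x y = 3.322 * (y * y) - (1 - 0.3317) * (x * x) - 0.3317 * (y * (x + 1))
      - 2.9901 * (y * (y + 1) / 2 - x * (x + 1) / 2)" for x y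
  have "0 \<le> g (real x) (real y)" for x y
  proof (rule nonneg_at_nat_pairsI)
    show "0 \<le> g 0 0" by (simp add: g_def)
  next
    fix v :: real assume v: "0 \<le> v"
    have "20000 * g 0 (1 + v) = 4 + 36543 * v + 36539 * v ^ 2"
      by (simp add: g_def field_simps power2_eq_square)
    then show "0 \<le> g 0 (1 + v)"
      using v zero_le_power[OF v, of 2] by linarith
  next
    fix u :: real assume u: "0 \<le> u"
    have "20000 * g (1 + u) 0 = 46436 + 62971 * u + 16535 * u ^ 2"
      by (simp add: g_def field_simps power2_eq_square)
    then show "0 \<le> g (1 + u) 0"
      using u zero_le_power[OF u, of 2] by linarith
  next
    fix u v :: real assume u: "0 \<le> u" and v: "0 \<le> v"
    have "20000 * g (1 + u) (1 + v) = 39806 + 29909 * v + 56337 * u + 36539 * v ^ 2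
        - 6634 * (u * v) + 16535 * u ^ 2"
      by (simp add: g_def field_simps power2_eq_square)
    then show "0 \<le> g (1 + u) (1 + v)"
      using u v weighted_amgm_2[of u v] zero_le_power2[of u] zero_le_power2[of v] by linarith
  qed
  then show ?thesis
    by (intro potential_smoothI[where F = "\<lambda>m. m * (m + 1) / 2" and g = g] sum_of_nats)
      (simp_all add: g_def)
qed

lemma potential_smooth_square: "potential_smooth 0.3317 2.9901 3.322 (\<lambda>z. z ^ 2)"
proof -
  define g :: "real \<Rightarrow> real \<Rightarrow> real" where
    "g x y = 3.322 * (y * y ^ 2) - (1 - 0.3317) * (x * x ^ 2) - 0.3317 * (y * (x + 1) ^ 2)
      - 2.9901 * (y * (y + 1) * (2 * y + 1) / 6 - x * (x + 1) * (2 * x + 1) / 6)" for x y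
  have "0 \<le> g (real x) (real y)" for x y
  proof (rule nonneg_at_nat_pairsI)
    show "0 \<le> g 0 0" by (simp add: g_def)
  next
    fix v :: real assume v: "0 \<le> v"
    have "20000 * g 0 (1 + v) = 4 + 63115 * v + 109617 * v ^ 2 + 46506 * v ^ 3"
      by (simp add: g_def field_simps power2_eq_square power3_eq_cube)
    then show "0 \<le> g 0 (1 + v)"
      using v zero_le_power[OF v, of 2] zero_le_power[OF v, of 3] by linarith
  next
    fix u :: real assume u: "0 \<le> u"
    have "20000 * g (1 + u) 0 = 46436 + 89473 * u + 49605 * u ^ 2 + 6568 * u ^ 3"
      by (simp add: g_def field_simps power2_eq_square power3_eq_cube)
    then show "0 \<le> g (1 + u) 0"
      using u zero_le_power[OF u, of 2] zero_le_power[OF u, of 3] by linarith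
  next
    fix u v :: real assume u: "0 \<le> u" and v: "0 \<le> v"
    have pow_nonneg: "0 \<le> u ^ k" "0 \<le> v ^ k" for k :: nat
      using u v by simp_all
    have "20000 * g (1 + u) (1 + v) = 26538 + 43213 * v + 62937 * u + 109617 * v ^ 2
        - 26536 * (u * v) + 42971 * u ^ 2 + 46506 * v ^ 3 - 6634 * (u ^ 2 * v) + 6568 * u ^ 3"
      by (simp add: g_def field_simps power2_eq_square power3_eq_cube)
    then show "0 \<le> g (1 + u) (1 + v)"
      using u v weighted_amgm_2[of u v] weighted_amgm_3[OF u v] pow_nonneg[of 2] pow_nonneg[of 3]
      by linarith
  qed
  then show ?thesis
    by (intro potential_smoothI[where F = "\<lambda>m. m * (m + 1) * (2 * m + 1) / 6" and g = g] sum_of_squares)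
      (simp_all add: g_def)
qed

lemma potential_smooth_cube: "potential_smooth 0.3317 2.9901 3.322 (\<lambda>z. z ^ 3)"
proof -
  define g :: "real \<Rightarrow> real \<Rightarrow> real" where
    "g x y = 3.322 * (y * y ^ 3) - (1 - 0.3317) * (x * x ^ 3) - 0.3317 * (y * (x + 1) ^ 3)
      - 2.9901 * ((y * (y + 1) / 2) ^ 2 - (x * (x + 1) / 2) ^ 2)" for x y
  have "0 \<le> g (real x) (real y)" for x y
  proof (rule nonneg_at_nat_pairsI)
    show "0 \<le> g 0 0" by (simp add: g_def)
  next
    fix v :: real assume v: "0 \<le> v"
    have "40000 * g 0 (1 + v) = 8 + 159440 * v + 408567 * v ^ 2 + 352114 * v ^ 3
        + 102979 * v ^ 4"
      by (simp add: g_def field_simps power2_eq_square power3_eq_cube power4_eq_xxxx)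
    then show "0 \<le> g 0 (1 + v)"
      using v zero_le_power[OF v, of 2] zero_le_power[OF v, of 3] zero_le_power[OF v, of 4]
        by linarith
  next
    fix u :: real assume u: "0 \<le> u"
    have "40000 * g (1 + u) 0 = 92872 + 251884 * u + 228321 * u ^ 2 + 72478 * u ^ 3
        + 3169 * u ^ 4"
      by (simp add: g_def field_simps power2_eq_square power3_eq_cube power4_eq_xxxx)
    then show "0 \<le> g (1 + u) 0"
      using u zero_le_power[OF u, of 2] zero_le_power[OF u, of 3] zero_le_power[OF u, of 4]
        by linarith
  next
    fix u v :: real assume u: "0 \<le> u" and v: "0 \<le> v"
    have pow_nonneg: "0 \<le> u ^ k" "0 \<le> v ^ k" for k :: nat
      using u v by simp_all
    \<comment> \<open>weighted_amgm_4 at c u with c = 113/355, tuned so that the u^3 v term below uses up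
      almost all of the u^4 and v^4 terms\<close>
    have amgm_4: "5771588 / 44738875 * (u ^ 3 * v) \<le> 489142083 / 15882300625 * u ^ 4 + v ^ 4"
      using weighted_amgm_4[of "113 / 355 * u" v] by (simp add: power_mult_distrib power_divide)
    have "40000 * g (1 + u) (1 + v) = 4 + 66564 * v + 92668 * u + 408567 * v ^ 2
        - 159216 * (u * v) + 148713 * u ^ 2 + 352114 * v ^ 3 - 79608 * (u ^ 2 * v) + 59210 * u ^ 3
        + 102979 * v ^ 4 - 13268 * (u ^ 3 * v) + 3169 * u ^ 4"
      by (simp add: g_def field_simps power2_eq_square power3_eq_cube power4_eq_xxxx)
    then show "0 \<le> g (1 + u) (1 + v)"
      using u v weighted_amgm_2[of u v] weighted_amgm_3[OF u v] amgm_4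
        pow_nonneg[of 2] pow_nonneg[of 3] pow_nonneg[of 4]
      by linarith
  qed
  then show ?thesis
    by (intro potential_smoothI[where F = "\<lambda>m. (m * (m + 1) / 2) ^ 2" and g = g] sum_of_cubes)
      (simp_all add: g_def)
qed

lemma potential_smooth_power:
  assumes "j \<le> 3"
  shows "potential_smooth 0.3317 2.9901 3.322 (\<lambda>z. z ^ j)"
proof -
  have "j \<in> {0, 1, 2, 3}"
    using assms by auto
  then show ?thesis
    using potential_smooth_one potential_smooth_id potential_smooth_square potential_smooth_cube
    by auto
qed

lemma potential_smooth_cubic:
  assumes "\<forall>j. 0 \<le> \<alpha> j" and "\<forall>z\<ge>0. f z = (\<Sum>j\<le>3. \<alpha> j * z ^ j)"
  shows "potential_smooth 0.3317 2.9901 3.322 f"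
proof -
  have "potential_smooth 0.3317 2.9901 3.322 (\<lambda>z. \<Sum>j\<le>3. \<alpha> j * z ^ j)"
    by (rule potential_smooth_sum) (use assms(1) potential_smooth_power in auto)
  moreover have "potential_smooth 0.3317 2.9901 3.322 f
      \<longleftrightarrow> potential_smooth 0.3317 2.9901 3.322 (\<lambda>z. \<Sum>j\<le>3. \<alpha> j * z ^ j)"
    using assms(2) by (intro potential_smooth_cong) simp
  ultimately show ?thesis by simp
qed

lemma mono_on_nonneg_poly:
  fixes f :: "real \<Rightarrow> real"
  assumes "\<forall>j. 0 \<le> \<alpha> j" and "\<forall>z\<ge>0. f z = (\<Sum>j\<le>d. \<alpha> j * z ^ j)"
  shows "mono_on {0..} f"
proof (rule mono_onI)
  fix a b :: real assume "a \<in> {0..}" "b \<in> {0..}" "a \<le> b"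
  then have "(\<Sum>j\<le>d. \<alpha> j * a ^ j) \<le> (\<Sum>j\<le>d. \<alpha> j * b ^ j)"
    using assms(1) by (intro sum_mono mult_left_mono power_mono) auto
  with \<open>a \<in> {0..}\<close> \<open>b \<in> {0..}\<close> show "f a \<le> f b"
    using assms(2) by simp
qed

theorem mainTheorem10:
  fixes n :: nat and E :: "'e set" and w :: "nat \<Rightarrow> real"
    and Sig :: "nat \<Rightarrow> 'e set set" and l :: "'e \<Rightarrow> real \<Rightarrow> real"
  assumes "is_congestion_game n E w Sig l"
    and "unweighted n w"
    and "cubic_latencies E l"
  shows "\<exists>S. is_PNE n w Sig l S \<and>
           (\<forall>T. is_profile n Sig T \<longrightarrow> SUM_cost n w l S \<le> 3.322 * SUM_cost n w l T)"
proof -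
  have fin: "finite E" and Sig: "\<forall>i<n. Sig i \<noteq> {} \<and> finite (Sig i)" "\<forall>i<n. Sig i \<subseteq> Pow E"
    using assms(1) by (auto simp: is_congestion_game_def)
  have mono: "\<forall>e\<in>E. mono_on {0..} (l e)"
    and smooth: "\<forall>e\<in>E. potential_smooth 0.3317 2.9901 3.322 (l e)"
    using assms(3) mono_on_nonneg_poly potential_smooth_cubic
    unfolding cubic_latencies_def by blast+
  obtain S where S: "is_profile n Sig S"
    and min: "\<And>T. is_profile n Sig T \<Longrightarrow> rosenthal_potential n E l S \<le> rosenthal_potential n E l T"
    using ex_rosenthal_potential_minimizer[OF Sig(1)] by blast
  have PNE: "is_PNE n w Sig l S"
    using fin Sig(2) assms(2) S min by (rule rosenthal_potential_minimizer_is_PNE)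
  have "SUM_cost n w l S \<le> 3.322 * SUM_cost n w l T" if "is_profile n Sig T" for T
    using SUM_cost_le_if_potential_smooth[OF fin Sig(2) assms(2) mono smooth _ _ PNE that min[OF that]]
    by simp
  with PNE show ?thesis by blast
qed

end
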